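(* Let $G$ be a finite connected graph. Let $\mathcal P_e$ (resp. $\mathcal P_o$) be the set of equivalence classes of prime reduced cycles of $G$ of even (resp. odd) length, and $\mathcal P_a$ the set of equivalence classes of prime reduced alternating cycles of $D_G$. Then: (1) If $C=(e_1,e_2,\dots,e_{2r-1},e_{2r})$ is a prime reduced cycle of $G$ of length $2r$, then $\tilde C=[e_1,e_2^{-1},e_3,\dots,e_{2r-1},e_{2r}^{-1}]$ and $\bar C=[e_1^{-1},e_2,e_3^{-1},\dots,e_{2r-1}^{-1},e_{2r}]$ are prime reduced alternating cycles of $D_G$ of length $2r$. (2) If $C=(e_1,\dots,e_{2r+1})$ is a prime reduced cycle of $G$ of length $2r+1$, then $\tilde C=[e_1,e_2^{-1},\dots,e_{2r+1},e_1^{-1},e_2,\dots,e_{2r+1}^{-1}]$ (the arcs $e_1,\dots,e_{2r+1},e_1,\dots,e_{2r+1}$ with every second arc, starting from the second, replaced by its inverse) is a prime reduced alternating cycle of $D_G$ of length $2(2r+1)$. (3) These assignments induce a bijection from $(\mathcal P_e\times\{1,2\})\cup\mathcal P_o$ onto $\mathcal P_a$, under which each class in $\mathcal P_e$ of length $2r$ corresponds to exactly two classes in $\mathcal P_a$ of length $2r$ and each class in $\mathcal P_o$ of length $2r+1$ corresponds to exactly one class in $\mathcal P_a$ of length $2(2r+1)$.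
   Context: Graphs are finite and simple. For a connected graph $G$, $D_G$ is its symmetric digraph with arc set $D(G)=\{(u,v),(v,u): uv\in E(G)\}$; for $e=(u,v)$, $o(e)=u$, $t(e)=v$, $e^{-1}=(v,u)$. A cycle of length $k$ in $G$ is a sequence $(e_1,\dots,e_k)$ of arcs with $t(e_i)=o(e_{i+1})$ ($1\le i\le k-1$) and $t(e_k)=o(e_1)$; it has backtracking if $e_{i+1}=e_i^{-1}$ for some $i\le k-1$; it is reduced if neither it nor its double $(e_1,\dots,e_k,e_1,\dots,e_k)$ has backtracking; it is prime if it is not $B^r$ for a cycle $B$ and $r\ge 2$; two cycles are equivalent if one is a cyclic shift of the other. An alternating walk of length $r$ in $D_G$ is a sequence $[e_1,\dots,e_r]$ of arcs with vertices $v_0,\dots,v_r$ such that either $e_i=(v_{i-1},v_i)$ for odd $i$ and $e_i=(v_i,v_{i-1})$ for even $i$, or $e_i=(v_i,v_{i-1})$ for odd $i$ and $e_i=(v_{i-1},v_i)$ for even $i$. It has backtracking if $e_{i+1}=e_i$ for some $i\le r-1$. An alternating cycle is an alternating walk of even length with $v_0=v_r$; it has a tail if $e_r=e_1$; it is reduced if it has neither backtracking nor a tail. Equivalence (cyclic shift of arc sequence), multiples and primality are as for cycles. *)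

theory Defs
  imports Main
begin

(* A finite simple graph G is given by its vertex set V and its symmetric,
   irreflexive adjacency relation Adj.  Adj is exactly the arc set D(G) of
   the symmetric digraph D_G. Arcs are pairs (u,v). *)

type_synonym 'a arc = "'a \<times> 'a"

definition finite_connected_graph :: "'a set \<Rightarrow> 'a arc set \<Rightarrow> bool" where
  "finite_connected_graph V Adj \<longleftrightarrow>
     finite V \<and> V \<noteq> {} \<and> Adj \<subseteq> V \<times> V \<and> sym Adj \<and> irrefl Adj \<and>
     (\<forall>u\<in>V. \<forall>v\<in>V. (u, v) \<in> Adj\<^sup>*)"

definition orig :: "'a arc \<Rightarrow> 'a" where "orig e = fst e"
definition termn :: "'a arc \<Rightarrow> 'a" where "termn e = snd e"
definition arc_inv :: "'a arc \<Rightarrow> 'a arc" where "arc_inv e = (snd e, fst e)"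

definition is_cycle :: "'a arc set \<Rightarrow> 'a arc list \<Rightarrow> bool" where
  "is_cycle Adj C \<longleftrightarrow> C \<noteq> [] \<and> set C \<subseteq> Adj \<and>
     (\<forall>i. i + 1 < length C \<longrightarrow> termn (C ! i) = orig (C ! (i + 1))) \<and>
     termn (last C) = orig (hd C)"

definition has_backtracking :: "'a arc list \<Rightarrow> bool" where
  "has_backtracking C \<longleftrightarrow> (\<exists>i. i + 1 < length C \<and> C ! (i + 1) = arc_inv (C ! i))"

definition reduced_cycle :: "'a arc set \<Rightarrow> 'a arc list \<Rightarrow> bool" where
  "reduced_cycle Adj C \<longleftrightarrow> is_cycle Adj C \<and> \<not> has_backtracking C \<and> \<not> has_backtracking (C @ C)"

definition prime_cycle :: "'a arc set \<Rightarrow> 'a arc list \<Rightarrow> bool" where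
  "prime_cycle Adj C \<longleftrightarrow> is_cycle Adj C \<and>
     \<not> (\<exists>B r. is_cycle Adj B \<and> r \<ge> 2 \<and> C = concat (replicate r B))"

(* alternating walks, with 0-based indices: arc number i (0-based) is arc number i+1 (1-based) *)
definition alt_walk :: "'a arc set \<Rightarrow> 'a arc list \<Rightarrow> 'a list \<Rightarrow> bool" where
  "alt_walk Adj W vs \<longleftrightarrow> set W \<subseteq> Adj \<and> length vs = length W + 1 \<and>
     ((\<forall>i<length W. W ! i = (if even i then (vs ! i, vs ! (i + 1)) else (vs ! (i + 1), vs ! i))) \<or>
      (\<forall>i<length W. W ! i = (if even i then (vs ! (i + 1), vs ! i) else (vs ! i, vs ! (i + 1)))))"

definition is_alt_cycle :: "'a arc set \<Rightarrow> 'a arc list \<Rightarrow> bool" where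
  "is_alt_cycle Adj W \<longleftrightarrow> W \<noteq> [] \<and> even (length W) \<and>
     (\<exists>vs. alt_walk Adj W vs \<and> vs ! 0 = vs ! length W)"

definition alt_has_backtracking :: "'a arc list \<Rightarrow> bool" where
  "alt_has_backtracking W \<longleftrightarrow> (\<exists>i. i + 1 < length W \<and> W ! (i + 1) = W ! i)"

definition alt_has_tail :: "'a arc list \<Rightarrow> bool" where
  "alt_has_tail W \<longleftrightarrow> W \<noteq> [] \<and> last W = hd W"

definition reduced_alt_cycle :: "'a arc set \<Rightarrow> 'a arc list \<Rightarrow> bool" where
  "reduced_alt_cycle Adj W \<longleftrightarrow> is_alt_cycle Adj W \<and> \<not> alt_has_backtracking W \<and> \<not> alt_has_tail W"

definition prime_alt_cycle :: "'a arc set \<Rightarrow> 'a arc list \<Rightarrow> bool" where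
  "prime_alt_cycle Adj W \<longleftrightarrow> is_alt_cycle Adj W \<and>
     \<not> (\<exists>B r. is_alt_cycle Adj B \<and> r \<ge> 2 \<and> W = concat (replicate r B))"

definition eq_class :: "'a arc list \<Rightarrow> 'a arc list set" where
  "eq_class C = {C'. \<exists>n. C' = rotate n C}"

definition P_even :: "'a arc set \<Rightarrow> 'a arc list set set" where
  "P_even Adj = {eq_class C | C. prime_cycle Adj C \<and> reduced_cycle Adj C \<and> even (length C)}"

definition P_odd :: "'a arc set \<Rightarrow> 'a arc list set set" where
  "P_odd Adj = {eq_class C | C. prime_cycle Adj C \<and> reduced_cycle Adj C \<and> odd (length C)}"

definition P_alt :: "'a arc set \<Rightarrow> 'a arc list set set" where
  "P_alt Adj = {eq_class W | W. prime_alt_cycle Adj W \<and> reduced_alt_cycle Adj W}"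

definition tilde_seq :: "'a arc list \<Rightarrow> 'a arc list" where
  "tilde_seq C = map (\<lambda>i. if odd i then arc_inv (C ! i) else C ! i) [0..<length C]"

definition bar_seq :: "'a arc list \<Rightarrow> 'a arc list" where
  "bar_seq C = map (\<lambda>i. if even i then arc_inv (C ! i) else C ! i) [0..<length C]"

definition tilde_even :: "'a arc list \<Rightarrow> 'a arc list" where "tilde_even C = tilde_seq C"
definition bar_even :: "'a arc list \<Rightarrow> 'a arc list" where "bar_even C = bar_seq C"
definition tilde_odd :: "'a arc list \<Rightarrow> 'a arc list" where "tilde_odd C = tilde_seq (C @ C)"

end

theory Submission
  imports Defs
begin

text \<open>
  Reversing every second arc of a closed walk of even length turns it into an alternating closed
  walk; this can be done in two ways (keep the arcs at even or at odd positions), and every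
  alternating closed walk arises in this way. Backtracking of the alternating walk corresponds to
  backtracking of the walk, and a tail to backtracking across its closing point, so reduced cycles
  and reduced alternating cycles correspond. Alternation commutes with powers of even period, so a
  prime reduced alternating cycle comes either from a prime reduced cycle \<open>C\<close> of even length or
  from the square \<open>C @ C\<close> of one of odd length: the square of a primitive list of odd length is not
  a power of even period. Rotating by an odd number of positions interchanges the two
  alternations. For even \<open>C\<close> the two resulting classes stay distinct because \<open>C\<close> is primitive,
  whereas for odd \<open>C\<close> the rotation of \<open>C @ C\<close> by \<open>length C\<close> identifies them.
\<close>

section \<open>Powers, primitive lists and rotation classes\<close>

abbreviation list_pow :: "nat \<Rightarrow> 'b list \<Rightarrow> 'b list" where
  "list_pow r xs \<equiv> concat (replicate r xs)"

lemma length_list_pow [simp]: "length (list_pow r xs) = r * length xs"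
  by (induct r) auto

lemma nth_list_pow: "i < r * length xs \<Longrightarrow> list_pow r xs ! i = xs ! (i mod length xs)"
proof (induct r arbitrary: i)
  case (Suc r)
  show ?case
  proof (cases "i < length xs")
    case False
    then have "i - length xs < r * length xs" using Suc.prems by simp
    moreover have "(i - length xs) mod length xs = i mod length xs"
      using False le_mod_geq[of "length xs" i] by simp
    ultimately show ?thesis using False Suc.hyps by (simp add: nth_append)
  qed (simp add: nth_append)
qed simp

lemma list_pow_mult: "list_pow r (list_pow s xs) = list_pow (r * s) xs"
  by (induct r) (auto simp: replicate_add)

lemma list_pow_2: "list_pow 2 xs = xs @ xs"
  by (simp add: numeral_2_eq_2)

lemma set_list_pow: "r \<ge> 1 \<Longrightarrow> set (list_pow r xs) = set xs"
  by (cases r) auto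

lemma rotate_list_pow: "rotate n (list_pow r xs) = list_pow r (rotate n xs)"
proof (cases "xs = []")
  case False
  show ?thesis
  proof (rule nth_equalityI)
    fix i assume "i < length (rotate n (list_pow r xs))"
    then have i: "i < r * length xs" by simp
    have "(n + i) mod (r * length xs) < r * length xs"
      using i by (intro mod_less_divisor) linarith
    then have "rotate n (list_pow r xs) ! i = xs ! ((n + i) mod (r * length xs) mod length xs)"
      using i by (simp add: nth_rotate nth_list_pow)
    also have "\<dots> = xs ! ((n + i mod length xs) mod length xs)"
      by (simp add: mod_mod_cancel mod_add_right_eq)
    also have "\<dots> = list_pow r (rotate n xs) ! i"
      using i False by (simp add: nth_list_pow nth_rotate)
    finally show "rotate n (list_pow r xs) ! i = list_pow r (rotate n xs) ! i" .
  qed simp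
qed simp

lemma rotate_length_list_pow: "rotate (length xs) (list_pow r xs) = list_pow r xs"
  by (simp add: rotate_list_pow)

lemma rotate_append_self: "rotate n (xs @ xs) = rotate n xs @ rotate n xs"
  using rotate_list_pow[of n 2 xs] by (simp add: list_pow_2)

definition primitive :: "'b list \<Rightarrow> bool" where
  "primitive xs \<longleftrightarrow> \<not> (\<exists>ys r. 2 \<le> r \<and> xs = list_pow r ys)"

lemma primitive_not_Nil: "primitive xs \<Longrightarrow> xs \<noteq> []"
  unfolding primitive_def by (metis concat_replicate_trivial order_refl)

lemma rotate_mult_eq_self: "rotate n xs = xs \<Longrightarrow> rotate (n * q) xs = xs"
  by (induct q) (simp_all add: rotate_rotate[symmetric])

lemma rotate_gcd_eq_self:
  assumes rot: "rotate m xs = xs"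
  shows "rotate (gcd m (length xs)) xs = xs"
proof (cases "m = 0")
  case False
  then obtain x y where bez: "m * x = length xs * y + gcd m (length xs)"
    using bezout_nat by blast
  have "xs = rotate (m * x) xs"
    using rotate_mult_eq_self[OF rot] by simp
  also have "\<dots> = rotate (gcd m (length xs)) (rotate (length xs * y) xs)"
    by (simp only: rotate_rotate bez add.commute)
  also have "\<dots> = rotate (gcd m (length xs)) xs"
    by simp
  finally show ?thesis by simp
qed simp

lemma nth_rotate_period:
  assumes rot: "rotate g xs = xs" and i: "i < length xs"
  shows "xs ! i = xs ! (i mod g)"
proof -
  have "i mod g < length xs"
    using i by (metis le_less_trans mod_less_eq_dividend)
  then have "xs ! (i mod g) = rotate (g * (i div g)) xs ! (i mod g)"
    using rotate_mult_eq_self[OF rot] by simp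
  also have "\<dots> = xs ! i"
    using \<open>i mod g < length xs\<close> i by (simp add: nth_rotate)
  finally show ?thesis by simp
qed

lemma primitive_rotate_eq_self:
  assumes prim: "primitive xs" and rot: "rotate n xs = xs"
  shows "length xs dvd n"
proof -
  define g where "g = gcd n (length xs)"
  have g: "g > 0" "g dvd length xs" "g \<le> length xs"
    using primitive_not_Nil[OF prim] by (auto simp: g_def dvd_imp_le)
  have "xs = list_pow (length xs div g) (take g xs)"
  proof (rule nth_equalityI)
    have len_take: "length (take g xs) = g"
      using g by simp
    then show len: "length xs = length (list_pow (length xs div g) (take g xs))"
      using g by simp
    fix i assume i: "i < length xs"
    then have "list_pow (length xs div g) (take g xs) ! i = take g xs ! (i mod length (take g xs))"
      using len by (intro nth_list_pow) simp
    also have "\<dots> = take g xs ! (i mod g)"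
      unfolding len_take ..
    also have "\<dots> = xs ! i"
      using g i nth_rotate_period[OF rotate_gcd_eq_self[OF rot] i] by (simp add: g_def)
    finally show "xs ! i = list_pow (length xs div g) (take g xs) ! i" by simp
  qed
  then have "length xs div g < 2"
    using prim unfolding primitive_def by (meson not_less)
  moreover have "length xs div g \<noteq> 0"
    using g by (simp add: div_greater_zero_iff)
  ultimately have "length xs div g = 1"
    by linarith
  then have "g = length xs"
    using g(2) by (metis dvd_mult_div_cancel mult.right_neutral)
  then show ?thesis
    unfolding g_def by (metis gcd_dvd1)
qed

lemma primitive_root: "xs \<noteq> [] \<Longrightarrow> \<exists>ys r. 1 \<le> r \<and> xs = list_pow r ys \<and> primitive ys"
proof (induct "length xs" arbitrary: xs rule: less_induct)
  case (less xs)
  show ?case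
  proof (cases "primitive xs")
    case True then show ?thesis by (intro exI[of _ xs] exI[of _ 1]) auto
  next
    case False
    then obtain ys r where r: "2 \<le> r" and xs: "xs = list_pow r ys" unfolding primitive_def by blast
    with less.prems have "ys \<noteq> []" "length ys < length xs" by auto
    then obtain zs s where "1 \<le> s" "ys = list_pow s zs" "primitive zs"
      using less.hyps by blast
    moreover have "xs = list_pow (r * s) zs"
      using xs \<open>ys = list_pow s zs\<close> by (simp add: list_pow_mult)
    moreover have "1 \<le> r * s"
      using r \<open>1 \<le> s\<close> by simp
    ultimately show ?thesis by blast
  qed
qed

lemma in_eq_class_self: "xs \<in> eq_class xs"
  by (auto simp: eq_class_def intro: exI[of _ 0])

lemma eq_class_rotate: "eq_class (rotate n xs) = eq_class xs"
proof
  show "eq_class (rotate n xs) \<subseteq> eq_class xs"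
    by (auto simp: eq_class_def rotate_rotate)
  show "eq_class xs \<subseteq> eq_class (rotate n xs)"
  proof
    fix ys assume "ys \<in> eq_class xs"
    then obtain m where ys: "ys = rotate m xs" by (auto simp: eq_class_def)
    have "rotate (m + length xs * n - n) (rotate n xs) = rotate (m + length xs * n) xs"
    proof (cases "xs = []")
      case False
      then have "n \<le> length xs * n" by (cases "length xs") auto
      then have "m + length xs * n - n + n = m + length xs * n" by linarith
      then show ?thesis by (simp only: rotate_rotate)
    qed simp
    also have "\<dots> = ys"
      by (metis ys mod_mult_self2 rotate_conv_mod mult.commute)
    finally show "ys \<in> eq_class (rotate n xs)"
      unfolding eq_class_def by blast
  qed
qed

lemma eq_class_eq_iff: "eq_class xs = eq_class ys \<longleftrightarrow> (\<exists>n. xs = rotate n ys)"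
proof
  assume "eq_class xs = eq_class ys"
  then show "\<exists>n. xs = rotate n ys"
    using in_eq_class_self[of xs] by (simp add: eq_class_def)
qed (auto simp: eq_class_rotate)

section \<open>Cycles\<close>

lemma arc_eq: "e = (orig e, termn e)"
  by (simp add: orig_def termn_def)

lemma orig_pair [simp]: "orig (u, v) = u"
  by (simp add: orig_def)

lemma termn_pair [simp]: "termn (u, v) = v"
  by (simp add: termn_def)

lemma arc_inv_pair [simp]: "arc_inv (u, v) = (v, u)"
  by (simp add: arc_inv_def)

lemma orig_arc_inv [simp]: "orig (arc_inv e) = termn e"
  by (simp add: orig_def termn_def arc_inv_def)

lemma termn_arc_inv [simp]: "termn (arc_inv e) = orig e"
  by (simp add: orig_def termn_def arc_inv_def)

lemma arc_inv_arc_inv [simp]: "arc_inv (arc_inv e) = e"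
  by (simp add: arc_inv_def)

lemma arc_inv_eq_iff: "arc_inv e = e' \<longleftrightarrow> e = arc_inv e'"
  by auto

lemma arc_inv_in_sym: "sym Adj \<Longrightarrow> e \<in> Adj \<Longrightarrow> arc_inv e \<in> Adj"
  by (cases e) (auto simp: sym_def)

lemma is_cycle_iff_mod:
  "is_cycle Adj C \<longleftrightarrow> C \<noteq> [] \<and> set C \<subseteq> Adj \<and>
     (\<forall>j<length C. termn (C ! j) = orig (C ! (Suc j mod length C)))"
proof (cases "C = []")
  case False
  have "(\<forall>j<length C. termn (C ! j) = orig (C ! (Suc j mod length C))) \<longleftrightarrow>
        (\<forall>i. i + 1 < length C \<longrightarrow> termn (C ! i) = orig (C ! (i + 1))) \<and>
        termn (C ! (length C - 1)) = orig (C ! 0)"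
    (is "?mod \<longleftrightarrow> ?inner \<and> ?wrap")
  proof
    assume mod: ?mod
    have ?inner
      using mod by auto
    moreover have ?wrap
      using mod[rule_format, of "length C - 1"] False by simp
    ultimately show "?inner \<and> ?wrap" ..
  next
    assume "?inner \<and> ?wrap"
    then have inner: ?inner and wrap: ?wrap by blast+
    show ?mod
    proof (intro allI impI)
      fix j assume j: "j < length C"
      show "termn (C ! j) = orig (C ! (Suc j mod length C))"
      proof (cases "Suc j < length C")
        case True
        then show ?thesis using inner by simp
      next
        case False
        then have "Suc j = length C" using j by simp
        then show ?thesis using wrap by (metis diff_Suc_1 mod_self)
      qed
    qed
  qed
  then show ?thesis
    using False by (simp add: is_cycle_def last_conv_nth hd_conv_nth)
qed (simp add: is_cycle_def)

lemma is_cycle_rotate: "is_cycle Adj C \<Longrightarrow> is_cycle Adj (rotate n C)"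
  unfolding is_cycle_iff_mod
proof (elim conjE, intro conjI allI impI)
  assume "C \<noteq> []" and "set C \<subseteq> Adj"
    and step: "\<forall>j<length C. termn (C ! j) = orig (C ! (Suc j mod length C))"
  then show "rotate n C \<noteq> []" "set (rotate n C) \<subseteq> Adj" by auto
  fix j assume "j < length (rotate n C)"
  then have j: "j < length C" by simp
  have "Suc j mod length C < length C"
    using j by (intro mod_less_divisor) linarith
  then have "rotate n C ! (Suc j mod length C) = C ! ((n + Suc j mod length C) mod length C)"
    by (rule nth_rotate)
  also have "\<dots> = C ! (Suc ((n + j) mod length C) mod length C)"
    by (simp add: mod_add_right_eq mod_Suc_eq)
  finally have "rotate n C ! (Suc j mod length C) = C ! (Suc ((n + j) mod length C) mod length C)" .
  moreover have "(n + j) mod length C < length C"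
    using j by (intro mod_less_divisor) linarith
  ultimately show "termn (rotate n C ! j) = orig (rotate n C ! (Suc j mod length (rotate n C)))"
    using step j by (simp add: nth_rotate)
qed

lemma all_less_mult_mod_iff:
  fixes r k :: nat
  assumes "0 < r"
  shows "(\<forall>j<r * k. P (j mod k)) \<longleftrightarrow> (\<forall>j<k. P j)"
proof
  assume all: "\<forall>j<r * k. P (j mod k)"
  have "k \<le> r * k"
    using assms by (cases r) auto
  then show "\<forall>j<k. P j"
    using all by (metis less_le_trans mod_less)
next
  assume "\<forall>j<k. P j"
  then show "\<forall>j<r * k. P (j mod k)"
    by (metis mod_less_divisor mult_0_right gr0I not_less_zero)
qed

lemma is_cycle_list_pow_iff:
  assumes r: "1 \<le> r"
  shows "is_cycle Adj (list_pow r B) \<longleftrightarrow> is_cycle Adj B"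
proof (cases "B = []")
  case False
  let ?step = "\<lambda>i. termn (B ! i) = orig (B ! (Suc i mod length B))"
  have "termn (list_pow r B ! j) = orig (list_pow r B ! (Suc j mod (r * length B))) \<longleftrightarrow> ?step (j mod length B)"
    if j: "j < r * length B" for j
  proof -
    have "Suc j mod (r * length B) < r * length B"
      using j by (intro mod_less_divisor) linarith
    then have "list_pow r B ! (Suc j mod (r * length B)) = B ! (Suc (j mod length B) mod length B)"
      by (simp add: nth_list_pow mod_mod_cancel mod_Suc_eq)
    then show ?thesis
      using j by (simp add: nth_list_pow)
  qed
  then have "(\<forall>j<r * length B. termn (list_pow r B ! j) = orig (list_pow r B ! (Suc j mod (r * length B))))
             \<longleftrightarrow> (\<forall>j<length B. ?step j)"
    using all_less_mult_mod_iff[of r "length B" ?step] r by auto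
  then show ?thesis
    using False r by (simp add: is_cycle_iff_mod set_list_pow)
qed (simp add: is_cycle_def)

lemma prime_cycle_iff_primitive: "prime_cycle Adj C \<longleftrightarrow> is_cycle Adj C \<and> primitive C"
proof
  assume prime: "prime_cycle Adj C"
  then have cycle: "is_cycle Adj C"
    by (simp add: prime_cycle_def)
  have "primitive C"
    unfolding primitive_def
  proof
    assume "\<exists>B r. 2 \<le> r \<and> C = list_pow r B"
    then obtain B r where r: "2 \<le> r" and C: "C = list_pow r B"
      by blast
    then have "is_cycle Adj B"
      using cycle is_cycle_list_pow_iff[of r Adj B] by simp
    then show False
      using prime r C by (auto simp: prime_cycle_def)
  qed
  with cycle show "is_cycle Adj C \<and> primitive C" ..
qed (auto simp: prime_cycle_def primitive_def)

lemma has_backtracking_append: "has_backtracking C \<Longrightarrow> has_backtracking (C @ D)"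
proof -
  assume "has_backtracking C"
  then obtain i where "i + 1 < length C" and "C ! (i + 1) = arc_inv (C ! i)"
    by (auto simp: has_backtracking_def)
  then show "has_backtracking (C @ D)"
    unfolding has_backtracking_def by (intro exI[of _ i]) (simp add: nth_append)
qed

lemma has_backtracking_append_self_iff:
  assumes "C \<noteq> []"
  shows "has_backtracking (C @ C) \<longleftrightarrow> has_backtracking C \<or> hd C = arc_inv (last C)"
proof
  assume "has_backtracking (C @ C)"
  then obtain i where i: "i + 1 < length C + length C" and bt: "(C @ C) ! (i + 1) = arc_inv ((C @ C) ! i)"
    unfolding has_backtracking_def by auto
  consider "i + 1 < length C" | "i + 1 = length C" | "length C \<le> i"
    by linarith
  then show "has_backtracking C \<or> hd C = arc_inv (last C)"
  proof cases
    case 1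
    then show ?thesis
      using bt unfolding has_backtracking_def by (auto simp: nth_append)
  next
    case 2
    then have "i = length C - 1"
      by simp
    then show ?thesis
      using 2 bt assms by (simp add: nth_append hd_conv_nth last_conv_nth)
  next
    case 3
    then have "C ! (i - length C + 1) = arc_inv (C ! (i - length C))"
      using bt by (simp add: nth_append Suc_diff_le)
    moreover have "i - length C + 1 < length C"
      using 3 i by simp
    ultimately show ?thesis
      unfolding has_backtracking_def by blast
  qed
next
  assume "has_backtracking C \<or> hd C = arc_inv (last C)"
  then show "has_backtracking (C @ C)"
  proof
    assume "hd C = arc_inv (last C)"
    then have "(C @ C) ! (length C - 1 + 1) = arc_inv ((C @ C) ! (length C - 1))"
      using assms by (simp add: nth_append hd_conv_nth last_conv_nth)
    moreover have "length C - 1 + 1 < length (C @ C)"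
      using assms by simp
    ultimately show ?thesis
      unfolding has_backtracking_def by blast
  qed (rule has_backtracking_append)
qed

lemma reduced_cycle_iff:
  "reduced_cycle Adj C \<longleftrightarrow> is_cycle Adj C \<and> \<not> has_backtracking C \<and> hd C \<noteq> arc_inv (last C)"
  unfolding reduced_cycle_def using has_backtracking_append_self_iff[of C]
  by (auto simp: is_cycle_def)

lemma reduced_cycle_append_self_iff:
  assumes "is_cycle Adj R"
  shows "reduced_cycle Adj (R @ R) \<longleftrightarrow> reduced_cycle Adj R"
proof -
  have "R \<noteq> []" and "is_cycle Adj (R @ R)"
    using assms is_cycle_list_pow_iff[of 2 Adj R] by (auto simp: is_cycle_def list_pow_2)
  then show ?thesis
    using assms by (simp add: reduced_cycle_iff has_backtracking_append_self_iff)
qed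

section \<open>Alternating cycles\<close>

definition alt_seq :: "bool \<Rightarrow> 'a arc list \<Rightarrow> 'a arc list" where
  "alt_seq b C = (if b then tilde_seq C else bar_seq C)"

lemma length_alt_seq [simp]: "length (alt_seq b C) = length C"
  by (simp add: alt_seq_def tilde_seq_def bar_seq_def)

lemma nth_alt_seq:
  "i < length C \<Longrightarrow> alt_seq b C ! i = (if even i = b then C ! i else arc_inv (C ! i))"
  by (simp add: alt_seq_def tilde_seq_def bar_seq_def)

lemma alt_seq_alt_seq [simp]: "alt_seq b (alt_seq b C) = C"
  by (rule nth_equalityI) (auto simp: nth_alt_seq)

lemma alt_seq_list_pow:
  assumes "even (length xs)"
  shows "alt_seq b (list_pow r xs) = list_pow r (alt_seq b xs)"
proof (rule nth_equalityI)
  fix i assume "i < length (alt_seq b (list_pow r xs))"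
  then have i: "i < r * length xs" by simp
  moreover have "even (i mod length xs) = even i"
    using assms by (simp add: dvd_mod_iff)
  moreover have "i mod length xs < length xs"
    using i by (intro mod_less_divisor) (cases "length xs"; simp)
  ultimately show "alt_seq b (list_pow r xs) ! i = list_pow r (alt_seq b xs) ! i"
    by (simp add: nth_alt_seq nth_list_pow)
qed simp

lemma rotate_alt_seq:
  assumes "even (length xs)"
  shows "rotate n (alt_seq b xs) = alt_seq (b = even n) (rotate n xs)"
proof (rule nth_equalityI)
  fix i assume "i < length (rotate n (alt_seq b xs))"
  then have i: "i < length xs" by simp
  moreover have "even ((n + i) mod length xs) = even (n + i)"
    using assms by (simp add: dvd_mod_iff)
  moreover have "(n + i) mod length xs < length xs"
    using i by (intro mod_less_divisor) linarith
  ultimately show "rotate n (alt_seq b xs) ! i = alt_seq (b = even n) (rotate n xs) ! i"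
    by (auto simp: nth_alt_seq nth_rotate)
qed simp

lemma is_alt_cycle_alt_seq:
  assumes sym: "sym Adj" and cycle: "is_cycle Adj C" and even: "even (length C)"
  shows "is_alt_cycle Adj (alt_seq b C)"
proof -
  from cycle have ne: "C \<noteq> []" and set: "set C \<subseteq> Adj"
    and step: "\<And>j. j < length C \<Longrightarrow> termn (C ! j) = orig (C ! (Suc j mod length C))"
    by (auto simp: is_cycle_iff_mod)
  define vs where "vs = map (\<lambda>i. orig (C ! (i mod length C))) [0..<Suc (length C)]"
  have vs: "\<And>i. i \<le> length C \<Longrightarrow> vs ! i = orig (C ! (i mod length C))"
    by (simp add: vs_def nth_map del: upt_Suc)
  have arc: "C ! i = (vs ! i, vs ! (i + 1))" if "i < length C" for i
    using that vs[of i] vs[of "i + 1"] step[OF that] arc_eq[of "C ! i"] by simp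
  have closed: "vs ! 0 = vs ! length C"
    using vs[of 0] vs[of "length C"] by simp
  have "set (alt_seq b C) \<subseteq> Adj"
  proof
    fix e assume "e \<in> set (alt_seq b C)"
    then obtain i where i: "i < length C" and e: "e = alt_seq b C ! i"
      by (auto simp: in_set_conv_nth)
    have "C ! i \<in> Adj"
      using set i by auto
    then show "e \<in> Adj"
      using arc_inv_in_sym[OF sym, of "C ! i"] i e by (simp add: nth_alt_seq)
  qed
  then have "alt_walk Adj (alt_seq b C) vs"
    unfolding alt_walk_def by (cases b) (auto simp: vs_def nth_alt_seq arc)
  moreover have "alt_seq b C \<noteq> []"
    using ne by (metis length_alt_seq length_0_conv)
  ultimately show ?thesis
    using even closed unfolding is_alt_cycle_def by auto
qed

lemma is_alt_cycle_obtain_cycle: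
  assumes sym: "sym Adj" and alt: "is_alt_cycle Adj W"
  obtains C b where "is_cycle Adj C" and "W = alt_seq b C"
proof -
  from alt obtain vs where ne: "W \<noteq> []" and walk: "alt_walk Adj W vs"
    and closed: "vs ! 0 = vs ! length W"
    unfolding is_alt_cycle_def by blast
  define C where "C = map (\<lambda>i. (vs ! i, vs ! Suc i)) [0..<length W]"
  have len: "length C = length W"
    by (simp add: C_def)
  have arc: "\<And>i. i < length W \<Longrightarrow> C ! i = (vs ! i, vs ! Suc i)"
    by (simp add: C_def)
  from walk have set: "set W \<subseteq> Adj" and
    orient: "(\<forall>i<length W. W ! i = (if even i then (vs ! i, vs ! (i + 1)) else (vs ! (i + 1), vs ! i))) \<or>
      (\<forall>i<length W. W ! i = (if even i then (vs ! (i + 1), vs ! i) else (vs ! i, vs ! (i + 1))))"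
    unfolding alt_walk_def by auto
  obtain b where W: "W = alt_seq b C"
    using orient
  proof
    assume "\<forall>i<length W. W ! i = (if even i then (vs ! i, vs ! (i + 1)) else (vs ! (i + 1), vs ! i))"
    then have "W = alt_seq True C"
      by (intro nth_equalityI) (auto simp: len nth_alt_seq arc)
    then show thesis by (rule that)
  next
    assume "\<forall>i<length W. W ! i = (if even i then (vs ! (i + 1), vs ! i) else (vs ! i, vs ! (i + 1)))"
    then have "W = alt_seq False C"
      by (intro nth_equalityI) (auto simp: len nth_alt_seq arc)
    then show thesis by (rule that)
  qed
  have "set C \<subseteq> Adj"
  proof
    fix e assume "e \<in> set C"
    then obtain i where i: "i < length W" and "e = C ! i"
      by (auto simp: in_set_conv_nth len)
    moreover have "W ! i = (if even i = b then C ! i else arc_inv (C ! i))"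
      unfolding W using i len by (simp add: nth_alt_seq)
    ultimately have "e = W ! i \<or> e = arc_inv (W ! i)"
      by auto
    moreover have "W ! i \<in> Adj"
      using set i by auto
    ultimately show "e \<in> Adj"
      using arc_inv_in_sym[OF sym, of "W ! i"] by auto
  qed
  moreover have "\<forall>j<length C. termn (C ! j) = orig (C ! (Suc j mod length C))"
  proof (intro allI impI)
    fix j assume "j < length C"
    then have j: "j < length W"
      by (simp add: len)
    show "termn (C ! j) = orig (C ! (Suc j mod length C))"
    proof (cases "Suc j < length W")
      case True
      then show ?thesis
        using j by (simp add: len arc)
    next
      case False
      then have "Suc j = length W"
        using j by simp
      then show ?thesis
        using j ne closed arc[of 0] by (simp add: len arc)
    qed
  qed
  ultimately have "is_cycle Adj C"
    using ne len by (auto simp: is_cycle_iff_mod)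
  then show thesis
    using W that by blast
qed

lemma alt_has_backtracking_alt_seq [simp]:
  "alt_has_backtracking (alt_seq b C) \<longleftrightarrow> has_backtracking C"
proof -
  have "alt_seq b C ! (i + 1) = alt_seq b C ! i \<longleftrightarrow> C ! (i + 1) = arc_inv (C ! i)"
    if "i + 1 < length C" for i
    using that by (auto simp: nth_alt_seq arc_inv_eq_iff)
  then show ?thesis
    unfolding alt_has_backtracking_def has_backtracking_def by auto
qed

lemma alt_has_tail_alt_seq:
  assumes "even (length C)"
  shows "alt_has_tail (alt_seq b C) \<longleftrightarrow> C \<noteq> [] \<and> hd C = arc_inv (last C)"
proof (cases "C = []")
  case False
  then have "odd (length C - 1)" and "length C - 1 < length C"
    using assms by (auto elim: evenE)
  moreover have ne: "alt_seq b C \<noteq> []"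
    using False by (metis length_alt_seq length_0_conv)
  ultimately have "last (alt_seq b C) = (if b then arc_inv (last C) else last C)"
    and "hd (alt_seq b C) = (if b then hd C else arc_inv (hd C))"
    using False by (auto simp: last_conv_nth hd_conv_nth nth_alt_seq)
  then show ?thesis
    using False ne by (auto simp: alt_has_tail_def arc_inv_eq_iff)
qed (simp add: alt_has_tail_def alt_seq_def tilde_seq_def bar_seq_def)

lemma reduced_alt_cycle_alt_seq_iff:
  assumes "sym Adj" and "is_cycle Adj C" and "even (length C)"
  shows "reduced_alt_cycle Adj (alt_seq b C) \<longleftrightarrow> reduced_cycle Adj C"
  using assms is_alt_cycle_alt_seq[OF assms]
  by (auto simp: reduced_alt_cycle_def reduced_cycle_iff alt_has_tail_alt_seq is_cycle_def)

lemma prime_alt_cycle_iff: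
  assumes sym: "sym Adj"
  shows "prime_alt_cycle Adj W \<longleftrightarrow>
    is_alt_cycle Adj W \<and> \<not> (\<exists>B r. even (length B) \<and> 2 \<le> r \<and> W = list_pow r B)"
proof
  assume prime: "prime_alt_cycle Adj W"
  then have alt: "is_alt_cycle Adj W"
    by (simp add: prime_alt_cycle_def)
  then obtain C b where cycle: "is_cycle Adj C" and W: "W = alt_seq b C"
    using is_alt_cycle_obtain_cycle[OF sym] by blast
  have "\<not> (even (length B) \<and> 2 \<le> r \<and> W = list_pow r B)" for B r
  proof
    assume B: "even (length B) \<and> 2 \<le> r \<and> W = list_pow r B"
    then have "C = list_pow r (alt_seq b B)"
      using W alt_seq_list_pow[of B b r] by (metis alt_seq_alt_seq)
    then have "is_cycle Adj (alt_seq b B)"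
      using cycle B is_cycle_list_pow_iff[of r Adj "alt_seq b B"] by simp
    then have "is_alt_cycle Adj B"
      using is_alt_cycle_alt_seq[OF sym, of "alt_seq b B" b] B by simp
    then show False
      using prime B unfolding prime_alt_cycle_def by blast
  qed
  with alt show "is_alt_cycle Adj W \<and> \<not> (\<exists>B r. even (length B) \<and> 2 \<le> r \<and> W = list_pow r B)"
    by blast
qed (auto simp: prime_alt_cycle_def is_alt_cycle_def)

lemma prime_alt_cycle_alt_seq_iff:
  assumes sym: "sym Adj" and cycle: "is_cycle Adj C" and even: "even (length C)"
  shows "prime_alt_cycle Adj (alt_seq b C) \<longleftrightarrow>
    \<not> (\<exists>B r. even (length B) \<and> 2 \<le> r \<and> C = list_pow r B)"
proof -
  have "alt_seq b C = list_pow r B \<longleftrightarrow> C = list_pow r (alt_seq b B)" if "even (length B)" for B r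
    using alt_seq_list_pow[OF that, of b r] by (metis alt_seq_alt_seq)
  then have "(\<exists>B r. even (length B) \<and> 2 \<le> r \<and> alt_seq b C = list_pow r B) \<longleftrightarrow>
             (\<exists>B r. even (length B) \<and> 2 \<le> r \<and> C = list_pow r B)"
    by (metis alt_seq_alt_seq length_alt_seq)
  then show ?thesis
    using prime_alt_cycle_iff[OF sym] is_alt_cycle_alt_seq[OF assms] by blast
qed

lemma prime_reduced_alt_cycle_of_even:
  assumes sym: "sym Adj" and prime: "prime_cycle Adj C" and reduced: "reduced_cycle Adj C"
    and even: "even (length C)"
  shows "prime_alt_cycle Adj (alt_seq b C) \<and> reduced_alt_cycle Adj (alt_seq b C)"
proof -
  have cycle: "is_cycle Adj C" and "primitive C"
    using prime by (auto simp: prime_cycle_iff_primitive)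
  then have "\<not> (\<exists>B r. even (length B) \<and> 2 \<le> r \<and> C = list_pow r B)"
    unfolding primitive_def by blast
  then show ?thesis
    using reduced prime_alt_cycle_alt_seq_iff[OF sym cycle even]
      reduced_alt_cycle_alt_seq_iff[OF sym cycle even] by blast
qed

text \<open>If \<open>R @ R = B\<^sup>r\<close>, rotation by \<open>length B\<close> fixes \<open>R\<close>, so \<open>length R\<close> divides \<open>length B\<close>
  by primitivity; but \<open>r\<close> is odd, hence at least 3, so \<open>length B < length R\<close>.\<close>
lemma double_odd_primitive_ne_even_pow:
  assumes prim: "primitive R" and odd: "odd (length R)"
    and even: "even (length B)" and r: "2 \<le> r"
  shows "R @ R \<noteq> list_pow r B"
proof
  assume RR: "R @ R = list_pow r B"
  obtain d where d: "length B = 2 * d"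
    using even by blast
  then have len: "length R = r * d"
    using arg_cong[OF RR, of length] by simp
  then have "odd r" and "odd d"
    using odd by auto
  then have "0 < d"
    by (simp add: odd_pos)
  then have "3 * d \<le> r * d"
    using r \<open>odd r\<close> by (cases "r = 2") auto
  then have short: "length B < length R"
    using len d \<open>0 < d\<close> by linarith
  have "rotate (length B) R @ rotate (length B) R = R @ R"
    unfolding RR rotate_append_self[symmetric] by (rule rotate_length_list_pow)
  then have "length R dvd length B"
    using primitive_rotate_eq_self[OF prim] by simp
  moreover have "0 < length B"
    using d \<open>0 < d\<close> by simp
  ultimately show False
    using short by (meson dvd_imp_le not_le)
qed

lemma prime_reduced_alt_cycle_of_odd:
  assumes sym: "sym Adj" and prime: "prime_cycle Adj R" and reduced: "reduced_cycle Adj R"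
    and odd: "odd (length R)"
  shows "prime_alt_cycle Adj (alt_seq b (R @ R)) \<and> reduced_alt_cycle Adj (alt_seq b (R @ R))"
proof -
  have cycle: "is_cycle Adj R" and prim: "primitive R"
    using prime by (auto simp: prime_cycle_iff_primitive)
  have cycle2: "is_cycle Adj (R @ R)"
    using is_cycle_list_pow_iff[of 2 Adj R] cycle by (simp add: list_pow_2)
  have even2: "even (length (R @ R))"
    by simp
  have "\<not> (\<exists>B r. even (length B) \<and> 2 \<le> r \<and> R @ R = list_pow r B)"
    using double_odd_primitive_ne_even_pow[OF prim odd] by blast
  moreover have "reduced_cycle Adj (R @ R)"
    using reduced_cycle_append_self_iff[OF cycle] reduced by simp
  ultimately show ?thesis
    using prime_alt_cycle_alt_seq_iff[OF sym cycle2 even2]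
      reduced_alt_cycle_alt_seq_iff[OF sym cycle2 even2] by blast
qed

lemma prime_reduced_alt_cycle_cases:
  assumes sym: "sym Adj" and prime: "prime_alt_cycle Adj W" and reduced: "reduced_alt_cycle Adj W"
  obtains (even_cycle) C b where "W = alt_seq b C" "prime_cycle Adj C" "reduced_cycle Adj C"
      "even (length C)"
    | (odd_cycle) R b where "W = alt_seq b (R @ R)" "prime_cycle Adj R" "reduced_cycle Adj R"
      "odd (length R)"
proof -
  obtain C b where cycle: "is_cycle Adj C" and W: "W = alt_seq b C"
    using is_alt_cycle_obtain_cycle[OF sym] prime by (auto simp: prime_alt_cycle_def)
  have even: "even (length C)"
    using prime W by (simp add: prime_alt_cycle_def is_alt_cycle_def)
  have reducedC: "reduced_cycle Adj C"
    using reduced_alt_cycle_alt_seq_iff[OF sym cycle even] reduced W by simp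
  have no_even_root: "\<not> (\<exists>B r. even (length B) \<and> 2 \<le> r \<and> C = list_pow r B)"
    using prime_alt_cycle_alt_seq_iff[OF sym cycle even] prime W by simp
  have "C \<noteq> []"
    using cycle by (simp add: is_cycle_def)
  then obtain R r where r: "1 \<le> r" and C: "C = list_pow r R" and prim: "primitive R"
    using primitive_root by blast
  have cycleR: "is_cycle Adj R"
    using cycle is_cycle_list_pow_iff[OF r] unfolding C by blast
  show thesis
  proof (cases "r = 1")
    case True
    then show thesis
      using even_cycle[OF W] C cycleR prim reducedC even by (simp add: prime_cycle_iff_primitive)
  next
    case False
    with r have r2: "2 \<le> r"
      by simp
    then have odd: "odd (length R)"
      using no_even_root C by blast
    then have "even r"
      using even C by simp
    then obtain s where s: "r = 2 * s"
      by blast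
    then have Cs: "C = list_pow s (R @ R)"
      using C by (simp add: list_pow_mult mult.commute flip: list_pow_2)
    have "even (length (R @ R))"
      by simp
    then have "\<not> 2 \<le> s"
      using no_even_root Cs by blast
    then have "C = R @ R"
      using Cs s r2 by (cases s) auto
    then show thesis
      using odd_cycle W cycleR prim reducedC odd
      by (simp add: prime_cycle_iff_primitive reduced_cycle_append_self_iff)
  qed
qed

section \<open>Classes of prime reduced cycles and alternating cycles\<close>

lemma eq_class_alt_seq_rotate:
  assumes "even (length xs)"
  shows "eq_class (alt_seq b (rotate n xs)) = eq_class (alt_seq (b = even n) xs)"
proof -
  have "((b = even n) = even n) = b"
    by auto
  then have "alt_seq b (rotate n xs) = rotate n (alt_seq (b = even n) xs)"
    using rotate_alt_seq[OF assms, of n "b = even n"] by simp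
  then show ?thesis
    by (simp add: eq_class_rotate)
qed

text \<open>Rotating \<open>R @ R\<close> by the odd number \<open>length R\<close> fixes it but swaps the two alternations.\<close>
lemma eq_class_alt_seq_append_self_odd:
  assumes "odd (length R)"
  shows "eq_class (alt_seq b (R @ R)) = eq_class (alt_seq c (R @ R))"
proof -
  have swap: "eq_class (alt_seq b (R @ R)) = eq_class (alt_seq (\<not> b) (R @ R))" for b
    using eq_class_alt_seq_rotate[of "R @ R" b "length R"] assms by (simp add: rotate_append)
  show ?thesis
    using swap[of b] by (cases "b = c") auto
qed

text \<open>If the two alternations differ, \<open>Y\<close> is \<open>X\<close> with every arc reversed, and the cycle conditions
  for \<open>X\<close> and \<open>Y\<close> at the first two arcs force \<open>X\<close> to backtrack there.\<close>
lemma alt_seq_eq_alt_seq_cycle: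
  assumes X: "is_cycle Adj X" and Y: "is_cycle Adj Y" and no_bt: "\<not> has_backtracking X"
    and even: "even (length X)" and eq: "alt_seq a X = alt_seq b Y"
  shows "a = b \<and> X = Y"
proof (cases "a = b")
  case True
  then have "alt_seq a (alt_seq a X) = alt_seq a (alt_seq a Y)"
    using eq by simp
  with True show ?thesis
    by simp
next
  case False
  have len: "length Y = length X"
    using arg_cong[OF eq, of length] by simp
  have "length X \<noteq> 0" and "length X \<noteq> 1"
    using X even by (auto simp: is_cycle_def)
  then have two: "0 + 1 < length X"
    by linarith
  have inv: "Y ! i = arc_inv (X ! i)" if "i < length X" for i
    using arg_cong[OF eq, of "\<lambda>W. W ! i"] that len False
    by (cases "even i = a") (auto simp: nth_alt_seq)
  have "termn (X ! 0) = orig (X ! 1)" and "termn (Y ! 0) = orig (Y ! 1)"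
    using X Y two len unfolding is_cycle_def by auto
  moreover have "Y ! 0 = arc_inv (X ! 0)" and "Y ! 1 = arc_inv (X ! 1)"
    using two by (intro inv; linarith)+
  ultimately have "X ! 1 = arc_inv (X ! 0)"
    by (simp add: arc_inv_def orig_def termn_def prod_eq_iff)
  then have "has_backtracking X"
    unfolding has_backtracking_def using two by (intro exI[of _ 0]) simp
  with no_bt show ?thesis
    by simp
qed

lemma eq_class_alt_seq_eqE:
  assumes X: "is_cycle Adj X" "\<not> has_backtracking X" "even (length X)"
    and Y: "is_cycle Adj Y" "even (length Y)"
    and eq: "eq_class (alt_seq a X) = eq_class (alt_seq b Y)"
  obtains n where "X = rotate n Y" and "a = (b = even n)"
proof -
  obtain n where "alt_seq a X = rotate n (alt_seq b Y)"
    using eq by (auto simp: eq_class_eq_iff)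
  then have "alt_seq a X = alt_seq (b = even n) (rotate n Y)"
    using rotate_alt_seq[OF Y(2)] by simp
  then show thesis
    using alt_seq_eq_alt_seq_cycle[OF X(1) is_cycle_rotate[OF Y(1)] X(2,3)] that by blast
qed

definition cycle_class_rep :: "'a arc set \<Rightarrow> 'a arc list set \<Rightarrow> 'a arc list" where
  "cycle_class_rep Adj c = (SOME C. c = eq_class C \<and> prime_cycle Adj C \<and> reduced_cycle Adj C)"

lemma cycle_class_rep:
  assumes "c = eq_class C" and "prime_cycle Adj C" and "reduced_cycle Adj C"
  shows "c = eq_class (cycle_class_rep Adj c)" and "prime_cycle Adj (cycle_class_rep Adj c)"
    and "reduced_cycle Adj (cycle_class_rep Adj c)" and "length (cycle_class_rep Adj c) = length C"
proof -
  have rep: "c = eq_class (cycle_class_rep Adj c) \<and> prime_cycle Adj (cycle_class_rep Adj c) \<and>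
      reduced_cycle Adj (cycle_class_rep Adj c)"
    unfolding cycle_class_rep_def by (rule someI[of _ C]) (use assms in blast)
  then show "c = eq_class (cycle_class_rep Adj c)" and "prime_cycle Adj (cycle_class_rep Adj c)"
    and "reduced_cycle Adj (cycle_class_rep Adj c)"
    by blast+
  obtain n where "cycle_class_rep Adj c = rotate n C"
    using rep assms(1) eq_class_eq_iff by metis
  then show "length (cycle_class_rep Adj c) = length C"
    by simp
qed

lemma P_even_rep:
  assumes "c \<in> P_even Adj"
  shows "c = eq_class (cycle_class_rep Adj c)" and "is_cycle Adj (cycle_class_rep Adj c)"
    and "primitive (cycle_class_rep Adj c)" and "\<not> has_backtracking (cycle_class_rep Adj c)"
    and "reduced_cycle Adj (cycle_class_rep Adj c)" and "even (length (cycle_class_rep Adj c))"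
  using assms cycle_class_rep[of c _ Adj] unfolding P_even_def
  by (auto simp: prime_cycle_iff_primitive reduced_cycle_iff)

lemma P_odd_rep:
  assumes "c \<in> P_odd Adj"
  shows "c = eq_class (cycle_class_rep Adj c)" and "prime_cycle Adj (cycle_class_rep Adj c)"
    and "reduced_cycle Adj (cycle_class_rep Adj c)" and "odd (length (cycle_class_rep Adj c))"
  using assms cycle_class_rep[of c _ Adj] unfolding P_odd_def by auto

abbreviation (input) labelled_prime_classes :: "'a arc set \<Rightarrow> ('a arc list set \<times> nat + 'a arc list set) set" where
  "labelled_prime_classes Adj \<equiv> Inl ` (P_even Adj \<times> {1, 2}) \<union> Inr ` P_odd Adj"

definition alt_class :: "'a arc set \<Rightarrow> 'a arc list set \<times> nat + 'a arc list set \<Rightarrow> 'a arc list set" where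
  "alt_class Adj x = (case x of
      Inl (c, i) \<Rightarrow> eq_class (alt_seq (i = 1) (cycle_class_rep Adj c))
    | Inr c \<Rightarrow> eq_class (alt_seq True (cycle_class_rep Adj c @ cycle_class_rep Adj c)))"

lemma alt_class_Inl:
  assumes c: "c \<in> P_even Adj" and C: "C \<in> c"
  shows "{alt_class Adj (Inl (c, 1)), alt_class Adj (Inl (c, 2))} =
    {eq_class (alt_seq True C), eq_class (alt_seq False C)}"
proof -
  obtain n where "C = rotate n (cycle_class_rep Adj c)"
    using C P_even_rep(1)[OF c] by (auto simp: eq_class_def)
  then have "eq_class (alt_seq b C) = eq_class (alt_seq (b = even n) (cycle_class_rep Adj c))" for b
    using eq_class_alt_seq_rotate[OF P_even_rep(6)[OF c]] by simp
  then show ?thesis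
    by (cases "even n") (auto simp: alt_class_def)
qed

lemma alt_class_Inr:
  assumes c: "c \<in> P_odd Adj" and C: "C \<in> c"
  shows "alt_class Adj (Inr c) = eq_class (alt_seq True (C @ C))"
proof -
  let ?R = "cycle_class_rep Adj c"
  obtain n where "C = rotate n ?R"
    using C P_odd_rep(1)[OF c] by (auto simp: eq_class_def)
  then have "eq_class (alt_seq True (C @ C)) = eq_class (alt_seq (even n) (?R @ ?R))"
    using eq_class_alt_seq_rotate[of "?R @ ?R" True n] by (simp add: rotate_append_self)
  also have "\<dots> = eq_class (alt_seq True (?R @ ?R))"
    using eq_class_alt_seq_append_self_odd[OF P_odd_rep(4)[OF c]] .
  finally show ?thesis
    by (simp add: alt_class_def)
qed

lemma alt_class_in_P_alt:
  assumes sym: "sym Adj" and x: "x \<in> labelled_prime_classes Adj"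
  shows "alt_class Adj x \<in> P_alt Adj"
  using x
proof
  assume "x \<in> Inl ` (P_even Adj \<times> {1, 2})"
  then obtain c i where c: "c \<in> P_even Adj" and x: "x = Inl (c, i)"
    by auto
  have "prime_cycle Adj (cycle_class_rep Adj c)"
    using P_even_rep[OF c] by (simp add: prime_cycle_iff_primitive)
  then show ?thesis
    using prime_reduced_alt_cycle_of_even[OF sym _ P_even_rep(5,6)[OF c]] x
    unfolding P_alt_def alt_class_def by auto
next
  assume "x \<in> Inr ` P_odd Adj"
  then obtain c where c: "c \<in> P_odd Adj" and x: "x = Inr c"
    by auto
  show ?thesis
    using prime_reduced_alt_cycle_of_odd[OF sym P_odd_rep(2-4)[OF c]] x
    unfolding P_alt_def alt_class_def by auto
qed

lemma P_alt_subset_alt_class_image: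
  assumes sym: "sym Adj"
  shows "P_alt Adj \<subseteq> alt_class Adj ` labelled_prime_classes Adj"
proof
  fix w assume "w \<in> P_alt Adj"
  then obtain W where w: "w = eq_class W" and prime: "prime_alt_cycle Adj W"
    and reduced: "reduced_alt_cycle Adj W"
    unfolding P_alt_def by blast
  from sym prime reduced show "w \<in> alt_class Adj ` labelled_prime_classes Adj"
  proof (cases rule: prime_reduced_alt_cycle_cases)
    case (even_cycle C b)
    then have c: "eq_class C \<in> P_even Adj"
      unfolding P_even_def by blast
    have "w \<in> {alt_class Adj (Inl (eq_class C, 1)), alt_class Adj (Inl (eq_class C, 2))}"
      using alt_class_Inl[OF c in_eq_class_self] w even_cycle(1) by (cases b) auto
    then show ?thesis
      using c by auto
  next
    case (odd_cycle R b)
    then have c: "eq_class R \<in> P_odd Adj"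
      unfolding P_odd_def by blast
    have "w = alt_class Adj (Inr (eq_class R))"
      using alt_class_Inr[OF c in_eq_class_self] w odd_cycle(1)
        eq_class_alt_seq_append_self_odd[OF odd_cycle(4)] by simp
    then show ?thesis
      using c by auto
  qed
qed

lemma alt_class_Inl_inj:
  assumes c: "c \<in> P_even Adj" and c': "c' \<in> P_even Adj" and ij: "i \<in> {1, 2}" "j \<in> {1, 2}"
    and eq: "alt_class Adj (Inl (c, i)) = alt_class Adj (Inl (c', j))"
  shows "c = c' \<and> i = j"
proof -
  let ?R = "cycle_class_rep Adj c" and ?R' = "cycle_class_rep Adj c'"
  have "eq_class (alt_seq (i = 1) ?R) = eq_class (alt_seq (j = 1) ?R')"
    using eq by (simp add: alt_class_def)
  then obtain n where n: "?R = rotate n ?R'" and parity: "(i = 1) = ((j = 1) = even n)"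
    by (rule eq_class_alt_seq_eqE[OF P_even_rep(2,4,6)[OF c] P_even_rep(2,6)[OF c']])
  have "c = c'"
    using n P_even_rep(1)[OF c] P_even_rep(1)[OF c'] by (simp add: eq_class_rotate)
  then have "rotate n ?R = ?R"
    using n by simp
  then have "even n"
    using primitive_rotate_eq_self[OF P_even_rep(3)[OF c]] P_even_rep(6)[OF c] by (blast intro: dvd_trans)
  with parity ij \<open>c = c'\<close> show ?thesis
    by auto
qed

lemma alt_class_Inl_ne_Inr:
  assumes c: "c \<in> P_even Adj" and c': "c' \<in> P_odd Adj"
  shows "alt_class Adj (Inl (c, i)) \<noteq> alt_class Adj (Inr c')"
proof
  let ?R = "cycle_class_rep Adj c" and ?R' = "cycle_class_rep Adj c'"
  have Y: "is_cycle Adj (?R' @ ?R')" "even (length (?R' @ ?R'))"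
    using P_odd_rep(2)[OF c'] is_cycle_list_pow_iff[of 2 Adj ?R']
    by (simp_all add: prime_cycle_iff_primitive list_pow_2)
  assume "alt_class Adj (Inl (c, i)) = alt_class Adj (Inr c')"
  then have "eq_class (alt_seq (i = 1) ?R) = eq_class (alt_seq True (?R' @ ?R'))"
    by (simp add: alt_class_def)
  then obtain n where "?R = rotate n (?R' @ ?R')" and "(i = 1) = (True = even n)"
    by (rule eq_class_alt_seq_eqE[OF P_even_rep(2,4,6)[OF c] Y])
  then have "?R = list_pow 2 (rotate n ?R')"
    by (simp add: rotate_append_self list_pow_2)
  then show False
    using P_even_rep(3)[OF c] unfolding primitive_def by blast
qed

lemma alt_class_Inr_inj:
  assumes c: "c \<in> P_odd Adj" and c': "c' \<in> P_odd Adj"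
    and eq: "alt_class Adj (Inr c) = alt_class Adj (Inr c')"
  shows "c = c'"
proof -
  let ?R = "cycle_class_rep Adj c" and ?R' = "cycle_class_rep Adj c'"
  have X: "is_cycle Adj (?R @ ?R)" "\<not> has_backtracking (?R @ ?R)" "even (length (?R @ ?R))"
    and Y: "is_cycle Adj (?R' @ ?R')" "even (length (?R' @ ?R'))"
    using P_odd_rep(2,3)[OF c] P_odd_rep(2)[OF c'] is_cycle_list_pow_iff[of 2 Adj]
    by (auto simp: prime_cycle_def reduced_cycle_def list_pow_2)
  have "eq_class (alt_seq True (?R @ ?R)) = eq_class (alt_seq True (?R' @ ?R'))"
    using eq by (simp add: alt_class_def)
  then obtain n where "?R @ ?R = rotate n (?R' @ ?R')"
    by (rule eq_class_alt_seq_eqE[OF X Y])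
  then have RR: "?R @ ?R = rotate n ?R' @ rotate n ?R'"
    by (simp add: rotate_append_self)
  moreover have "length ?R = length (rotate n ?R')"
    using arg_cong[OF RR, of length] by simp
  ultimately have "?R = rotate n ?R'"
    by simp
  then show ?thesis
    using P_odd_rep(1)[OF c] P_odd_rep(1)[OF c'] by (simp add: eq_class_rotate)
qed

lemma inj_on_alt_class: "inj_on (alt_class Adj) (labelled_prime_classes Adj)"
proof (rule inj_onI)
  fix x y assume x: "x \<in> labelled_prime_classes Adj" and y: "y \<in> labelled_prime_classes Adj"
    and eq: "alt_class Adj x = alt_class Adj y"
  from x consider (even) c i where "c \<in> P_even Adj" "i \<in> {1, 2}" "x = Inl (c, i)"
    | (odd) c where "c \<in> P_odd Adj" "x = Inr c"
    by auto
  then show "x = y"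
  proof cases
    case (even c i)
    from y consider (even') c' j where "c' \<in> P_even Adj" "j \<in> {1, 2}" "y = Inl (c', j)"
      | (odd') c' where "c' \<in> P_odd Adj" "y = Inr c'"
      by auto
    then show ?thesis
    proof cases
      case (even' c' j)
      then show ?thesis
        using even eq alt_class_Inl_inj[of c Adj c' i j] by simp
    next
      case (odd' c')
      then show ?thesis
        using even eq alt_class_Inl_ne_Inr[of c Adj c' i] by simp
    qed
  next
    case (odd c)
    from y consider (even') c' j where "c' \<in> P_even Adj" "y = Inl (c', j)"
      | (odd') c' where "c' \<in> P_odd Adj" "y = Inr c'"
      by auto
    then show ?thesis
    proof cases
      case (even' c' j)
      then show ?thesis
        using odd eq alt_class_Inl_ne_Inr[of c' Adj c j] by simp
    next
      case (odd' c')
      then show ?thesis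
        using odd eq alt_class_Inr_inj[of c Adj c'] by simp
    qed
  qed
qed

lemma bij_betw_alt_class:
  assumes "sym Adj"
  shows "bij_betw (alt_class Adj) (labelled_prime_classes Adj) (P_alt Adj)"
  unfolding bij_betw_def
  using inj_on_alt_class alt_class_in_P_alt[OF assms] P_alt_subset_alt_class_image[OF assms]
  by blast

theorem proposition1:
  fixes V :: "'a set" and Adj :: "'a arc set"
  assumes G: "finite_connected_graph V Adj"
  shows
    "(\<forall>C. prime_cycle Adj C \<and> reduced_cycle Adj C \<and> even (length C) \<longrightarrow>
        prime_alt_cycle Adj (tilde_even C) \<and> reduced_alt_cycle Adj (tilde_even C) \<and>
        length (tilde_even C) = length C \<and>
        prime_alt_cycle Adj (bar_even C) \<and> reduced_alt_cycle Adj (bar_even C) \<and>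
        length (bar_even C) = length C)
   \<and> (\<forall>C. prime_cycle Adj C \<and> reduced_cycle Adj C \<and> odd (length C) \<longrightarrow>
        prime_alt_cycle Adj (tilde_odd C) \<and> reduced_alt_cycle Adj (tilde_odd C) \<and>
        length (tilde_odd C) = 2 * length C)
   \<and> (\<exists>f. bij_betw f (Inl ` (P_even Adj \<times> {1::nat, 2}) \<union> Inr ` P_odd Adj) (P_alt Adj) \<and>
        (\<forall>c\<in>P_even Adj. \<forall>C\<in>c.
           {f (Inl (c, 1)), f (Inl (c, 2))} = {eq_class (tilde_even C), eq_class (bar_even C)}) \<and>
        (\<forall>c\<in>P_odd Adj. \<forall>C\<in>c. f (Inr c) = eq_class (tilde_odd C)))"
proof -
  have sym: "sym Adj"
    using G by (simp add: finite_connected_graph_def)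
  have tilde: "tilde_seq C = alt_seq True C" and bar: "bar_seq C = alt_seq False C"
    for C :: "'a arc list"
    by (simp_all add: alt_seq_def)
  show ?thesis
    unfolding tilde_even_def bar_even_def tilde_odd_def tilde bar
    by (intro conjI allI impI exI[of _ "alt_class Adj"] ballI)
      (use prime_reduced_alt_cycle_of_even[OF sym] prime_reduced_alt_cycle_of_odd[OF sym]
        bij_betw_alt_class[OF sym] alt_class_Inl alt_class_Inr in simp_all)
qed

end
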